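(* Let $\mathbb{K}$ be a field of characteristic not $2$ and $n\geq 3$. Let $\mathcal{V}$ be a linear subspace of $M_n(\mathbb{K})$ in which every matrix has at most two distinct eigenvalues in $\mathbb{K}$, and assume $\mathcal{V}$ is spanned by matrices of rank $1$ and trace $0$. Then $\dim\mathcal{V}\leq n^2/2$. *)

theory Defs
  imports "HOL-Analysis.Analysis"
begin

definition mscale :: "'a::field \<Rightarrow> 'a^'n^'n \<Rightarrow> 'a^'n^'n" where
  "mscale c A = (\<chi> i j. c * A $ i $ j)"

interpretation mat: vector_space "mscale :: 'a::field \<Rightarrow> 'a^'n^'n \<Rightarrow> 'a^'n^'n"
  by unfold_locales (auto simp: mscale_def vec_eq_iff algebra_simps)

definition eigenvalues :: "'a::field^'n^'n \<Rightarrow> 'a set" where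
  "eigenvalues A = {l. \<exists>v. v \<noteq> 0 \<and> A *v v = l *s v}"

end

(*
  Write a rank-one trace-zero matrix as A = u v\<^sup>T with v\<^sup>T u = 0, and likewise B = w z\<^sup>T.
  Then c = tr(AB) = (v\<^sup>T w)(z\<^sup>T u), and if c \<noteq> 0 the matrix cA + B has the eigenvalues \<plusminus>c
  (eigenvectors l u + (z\<^sup>T u) w with l\<^sup>2 = c\<^sup>2) and 0 (any vector orthogonal to v and z, which
  exists because n \<ge> 3); as c \<noteq> -c in characteristic not 2, that is three eigenvalues.
  So the trace form (X, Y) \<mapsto> tr(XY) vanishes on a spanning set of V, hence on V.
  Flattening matrices to vectors of length n\<^sup>2, tr(XY) is the dot product of X with Y\<^sup>T, so V
  and V\<^sup>T are orthogonal subspaces of dimension dim V, and 2 dim V \<le> n\<^sup>2.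
*)
theory Submission
  imports Defs
begin

definition dot :: "'a::comm_semiring_0^'m \<Rightarrow> 'a^'m \<Rightarrow> 'a" where
  "dot x y = (\<Sum>i\<in>UNIV. x $ i * y $ i)"

lemma dot_commute: "dot x y = dot y x"
  by (simp add: dot_def mult.commute)

lemma dot_add_right [simp]: "dot x (y + z) = dot x y + dot x z"
  by (simp add: dot_def distrib_left sum.distrib)

lemma dot_add_left [simp]: "dot (x + y) z = dot x z + dot y z"
  by (simp add: dot_def distrib_right sum.distrib)

lemma dot_diff_right [simp]: "dot x (y - z) = dot x y - dot (x::'a::comm_ring^'m) z"
  by (simp add: dot_def right_diff_distrib sum_subtractf)

lemma dot_diff_left [simp]: "dot (x - y) z = dot x z - dot (y::'a::comm_ring^'m) z"
  by (simp add: dot_def left_diff_distrib sum_subtractf)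

lemma dot_scale_right [simp]: "dot x (c *s y) = c * dot x y"
  by (simp add: dot_def sum_distrib_left algebra_simps)

lemma dot_scale_left [simp]: "dot (c *s x) y = c * dot x y"
  by (simp add: dot_def sum_distrib_left algebra_simps)

lemma dot_zero_right [simp]: "dot x 0 = 0"
  by (simp add: dot_def)

lemma dot_zero_left [simp]: "dot 0 x = 0"
  by (simp add: dot_def)

lemma dot_sum_right: "dot x (sum f S) = (\<Sum>s\<in>S. dot x (f s))"
  by (induction S rule: infinite_finite_induct) auto

lemma dot_sum_left: "dot (sum f S) x = (\<Sum>s\<in>S. dot (f s) x)"
  by (induction S rule: infinite_finite_induct) auto

lemma dot_axis_right [simp]: "dot x (axis i 1) = (x::'a::comm_semiring_1^'m) $ i"
  by (simp add: dot_def axis_def if_distrib cong: if_cong)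

lemma matrix_vector_mult_component_dot: "(A *v x) $ i = dot (A $ i) x"
  by (simp add: matrix_vector_mult_def dot_def)

lemma linear_dot_expansion:
  "Vector_Spaces.linear (*s) (*s) (\<lambda>x::'a::field^'m. \<Sum>b\<in>B. dot b x *s y b)"
  by unfold_locales (simp_all add: sum.distrib vec.scale_sum_right algebra_simps)

definition dual_family :: "('a::field^'m) set \<Rightarrow> ('a^'m \<Rightarrow> 'a^'m) \<Rightarrow> bool" where
  "dual_family B y \<longleftrightarrow> (\<forall>b\<in>B. \<forall>b'\<in>B. dot b' (y b) = (if b' = b then 1 else 0))"

lemma dual_vector_exists:
  fixes b :: "'a::field^'m"
  assumes "finite B" "b \<notin> vec.span B" "dual_family B y"
  obtains w where "dot b w = 1" "\<And>b'. b' \<in> B \<Longrightarrow> dot b' w = 0"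
proof -
  define c where "c = b - (\<Sum>b'\<in>B. dot b (y b') *s b')"
  have "(\<Sum>b'\<in>B. dot b (y b') *s b') \<in> vec.span B"
    by (intro vec.span_sum vec.span_scale vec.span_base)
  then have "c \<noteq> 0"
    using assms(2) by (auto simp: c_def)
  then obtain p where p: "c $ p \<noteq> 0"
    by (auto simp: vec_eq_iff)
  define P where "P x = x - (\<Sum>b'\<in>B. dot b' x *s y b')" for x
  have P_orth: "dot b'' (P x) = 0" if "b'' \<in> B" for b'' x
  proof -
    have "(\<Sum>b'\<in>B. dot b' x * dot b'' (y b')) = (\<Sum>b'\<in>B. if b' = b'' then dot b' x else 0)"
      using assms(3) that by (intro sum.cong) (auto simp: dual_family_def)
    then show ?thesis
      using assms(1) that by (simp add: P_def dot_sum_right)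
  qed
  have P_b: "dot b (P x) = dot c x" for x
    by (simp add: P_def c_def dot_sum_right dot_sum_left mult.commute)
  show ?thesis
  proof
    show "dot b ((1 / c $ p) *s P (axis p 1)) = 1"
      using p by (simp add: P_b)
    show "dot b' ((1 / c $ p) *s P (axis p 1)) = 0" if "b' \<in> B" for b'
      using P_orth[OF that] by simp
  qed
qed

lemma dual_family_exists:
  fixes B :: "('a::field^'m) set"
  assumes "vec.independent B"
  obtains y where "dual_family B y"
proof -
  have "finite B"
    using assms vec.finiteI_independent by blast
  then have "\<exists>y. dual_family B y"
    using assms
  proof (induction B rule: finite_induct)
    case empty
    then show ?case by (simp add: dual_family_def)
  next
    case (insert b B)
    then have "vec.independent B" "b \<notin> vec.span B"
      by (simp_all add: vec.independent_insert)
    with insert.IH obtain y where y: "dual_family B y"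
      by blast
    obtain w where w: "dot b w = 1" "\<And>b'. b' \<in> B \<Longrightarrow> dot b' w = 0"
      using dual_vector_exists[OF insert.hyps(1) \<open>b \<notin> vec.span B\<close> y] by blast
    define y' where "y' x = (if x = b then w else y x - dot b (y x) *s w)" for x
    have "dual_family (insert b B) y'"
      using y w insert.hyps(2) by (auto simp: dual_family_def y'_def)
    then show ?case by blast
  qed
  with that show ?thesis by blast
qed

lemma dual_family_independent_image:
  assumes "dual_family B y"
  shows "vec.independent (y ` B)" and "inj_on y B"
proof -
  show "inj_on y B"
  proof
    fix b1 b2 assume "b1 \<in> B" "b2 \<in> B" "y b1 = y b2"
    have "dot b1 (y b1) = 1"
      using assms \<open>b1 \<in> B\<close> by (simp add: dual_family_def)
    with \<open>y b1 = y b2\<close> have "dot b1 (y b2) = 1"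
      by simp
    moreover have "dot b1 (y b2) = (if b1 = b2 then 1 else 0)"
      using assms \<open>b1 \<in> B\<close> \<open>b2 \<in> B\<close> by (simp add: dual_family_def)
    ultimately show "b1 = b2"
      by (metis zero_neq_one)
  qed
  show "vec.independent (y ` B)"
    unfolding vec.dependent_def
  proof
    assume "\<exists>v\<in>y ` B. v \<in> vec.span (y ` B - {v})"
    then obtain b0 where b0: "b0 \<in> B" "y b0 \<in> vec.span (y ` B - {y b0})"
      by blast
    have "y ` B - {y b0} \<subseteq> {x. dot b0 x = 0}"
      using assms b0(1) by (auto simp: dual_family_def)
    moreover have "vec.subspace {x. dot b0 x = 0}"
      by (auto simp: vec.subspace_def)
    ultimately have "dot b0 (y b0) = 0"
      using b0(2) vec.span_minimal by blast
    with assms b0(1) show False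
      by (simp add: dual_family_def)
  qed
qed

lemma dual_family_expansion:
  assumes "finite B" "dual_family B y" "x \<in> vec.span (y ` B)"
  shows "x = (\<Sum>b\<in>B. dot b x *s y b)"
proof -
  have "id x = (\<Sum>b\<in>B. dot b x *s y b)"
  proof (rule vec.linear_eq_on_span[OF vec.linear_id linear_dot_expansion _ assms(3)])
    fix v assume "v \<in> y ` B"
    then obtain b0 where b0: "b0 \<in> B" "v = y b0"
      by blast
    have "(\<Sum>b\<in>B. dot b (y b0) *s y b) = (\<Sum>b\<in>B. if b = b0 then y b else 0)"
      using assms(2) b0(1) by (intro sum.cong) (auto simp: dual_family_def)
    with assms(1) b0 show "id v = (\<Sum>b\<in>B. dot b v *s y b)"
      by simp
  qed
  then show ?thesis by simp
qed

theorem dim_add_dim_le_if_orthogonal: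
  fixes U W :: "('a::field^'m) set"
  assumes "vec.subspace U" "vec.subspace W"
    and orth: "\<And>u w. u \<in> U \<Longrightarrow> w \<in> W \<Longrightarrow> dot u w = 0"
  shows "vec.dim U + vec.dim W \<le> CARD('m)"
proof -
  obtain B where B: "B \<subseteq> U" "vec.independent B" "U \<subseteq> vec.span B" "card B = vec.dim U"
    using vec.basis_exists by blast
  have "finite B"
    using B(2) vec.finiteI_independent by blast
  obtain y where y: "dual_family B y"
    using dual_family_exists[OF B(2)] .
  define T where "T = vec.span (y ` B)"
  have "vec.dim T = vec.dim U"
    using dual_family_independent_image[OF y] B(4)
    by (simp add: T_def vec.dim_eq_card_independent card_image)
  have "W \<inter> T \<subseteq> {0}"
  proof
    fix x assume x: "x \<in> W \<inter> T"
    then have "x = (\<Sum>b\<in>B. dot b x *s y b)"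
      using dual_family_expansion[OF \<open>finite B\<close> y] by (simp add: T_def)
    also have "\<dots> = 0"
      using x B(1) orth by (intro sum.neutral) auto
    finally show "x \<in> {0}" by simp
  qed
  then have "vec.dim (W \<inter> T) = 0"
    by simp
  moreover have "vec.dim {p + q |p q. p \<in> W \<and> q \<in> T} + vec.dim (W \<inter> T) = vec.dim W + vec.dim T"
    using vec.dim_sums_Int[OF assms(2)] by (simp add: T_def)
  moreover have "vec.dim {p + q |p q. p \<in> W \<and> q \<in> T} \<le> CARD('m)"
    by (rule dim_subset_UNIV_cart_gen)
  ultimately show ?thesis
    using \<open>vec.dim T = vec.dim U\<close> by linarith
qed

lemma matrix_vector_mult_kernel_nontrivial:
  fixes R :: "'a::field^'m^'k"
  assumes "CARD('k) < CARD('m)"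
  obtains x where "x \<noteq> 0" "R *v x = 0"
proof (rule ccontr)
  assume "\<not> thesis"
  with that have kernel: "R *v x = 0 \<Longrightarrow> x = 0" for x
    by blast
  have "inj ((*v) R)"
  proof (rule injI)
    fix x y assume "R *v x = R *v y"
    then have "R *v (x - y) = 0"
      by (simp add: matrix_vector_mult_diff_distrib)
    then show "x = y"
      using kernel[of "x - y"] by simp
  qed
  then have "vec.dim (range ((*v) R)) = CARD('m)"
    by (simp add: vec.dim_image_eq matrix_vector_mul_linear_gen card_cart_basis)
  moreover have "vec.dim (range ((*v) R)) \<le> CARD('k)"
    by (rule dim_subset_UNIV_cart_gen)
  ultimately show False
    using assms by simp
qed

lemma common_orthogonal_vector_exists:
  fixes v z :: "'a::field^'n"
  assumes "CARD('n) \<ge> 3"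
  obtains x where "x \<noteq> 0" "dot v x = 0" "dot z x = 0"
proof -
  define R :: "'a^'n^2" where "R = (\<chi> i. if i = 1 then v else z)"
  have "CARD(2) < CARD('n)"
    using assms by simp
  then obtain x where "x \<noteq> 0" "R *v x = 0"
    by (rule matrix_vector_mult_kernel_nontrivial)
  moreover have "dot v x = (R *v x) $ 1" "dot z x = (R *v x) $ 2"
    by (simp_all add: R_def matrix_vector_mult_component_dot)
  ultimately show ?thesis
    using that by simp
qed

lemma two_neq_zero_if_CHAR_neq_2:
  assumes "CHAR('a::idom) \<noteq> 2"
  shows "(2::'a) \<noteq> 0"
proof
  assume "(2::'a) = 0"
  then have "CHAR('a) dvd 2"
    using of_nat_eq_0_iff_char_dvd[of 2, where 'a='a] by simp
  then have "CHAR('a) \<le> 2"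
    by (simp add: dvd_imp_le)
  then have "CHAR('a) = 0 \<or> CHAR('a) = 1 \<or> CHAR('a) = 2"
    by linarith
  with assms \<open>CHAR('a) dvd 2\<close> show False
    by auto
qed

definition outer :: "'a::times^'m \<Rightarrow> 'a^'n \<Rightarrow> 'a^'n^'m" where
  "outer u v = (\<chi> i j. u $ i * v $ j)"

lemma outer_mult_vector: "outer u v *v x = dot v x *s (u::'a::comm_semiring_1^'m)"
  by (simp add: outer_def dot_def matrix_vector_mult_def vec_eq_iff sum_distrib_left algebra_simps)

lemma trace_outer: "trace (outer u v) = dot u (v::'a::comm_semiring_1^'n)"
  by (simp add: trace_def outer_def dot_def)

lemma trace_outer_mult_outer:
  "trace (outer u v ** outer w z) = dot v w * dot z (u::'a::comm_semiring_1^'n)"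
proof -
  have "trace (outer u v ** outer w z) = (\<Sum>i\<in>UNIV. \<Sum>j\<in>UNIV. (z$i * u$i) * (v$j * w$j))"
    by (simp add: trace_def outer_def matrix_matrix_mult_def sum_distrib_left algebra_simps)
  also have "\<dots> = dot z u * dot v w"
    by (simp add: dot_def sum_product)
  finally show ?thesis
    by (simp add: mult.commute)
qed

lemma rank_1_imp_outer:
  fixes A :: "'a::field^'n^'m"
  assumes "rank A = 1"
  obtains u v where "A = outer u v"
proof -
  obtain B where B: "B \<subseteq> rows A" "vec.independent B" "rows A \<subseteq> vec.span B" "card B = 1"
    using vec.basis_exists[of "rows A"] assms by (metis row_rank_def_gen)
  then obtain v where "B = {v}"
    using card_1_singletonE by blast
  with B(3) have "\<exists>k. row i A = k *s v" for i
    by (auto simp: rows_def vec.span_singleton)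
  then obtain k where k: "\<And>i. row i A = k i *s v"
    by metis
  have "A = outer (\<chi> i. k i) v"
    using k by (simp add: outer_def vec_eq_iff row_def)
  with that show ?thesis .
qed

lemma mscale_mult_vector: "mscale c A *v x = c *s (A *v x)"
  by (simp add: mscale_def matrix_vector_mult_def vec_eq_iff sum_distrib_left algebra_simps)

lemma eigenvalues_scaled_outer_plus_outer:
  fixes u v w z :: "'a::field^'n"
  assumes "CARD('n) \<ge> 3" and vu: "dot v u = 0" and zw: "dot z w = 0"
    and c: "c = dot v w * dot z u" "c \<noteq> 0"
  shows "eigenvalues (mscale c (outer u v) + outer w z) = {c, -c, 0}"
proof -
  define M where "M = mscale c (outer u v) + outer w z"
  have M: "M *v x = (c * dot v x) *s u + dot z x *s w" for x
    by (simp add: M_def matrix_vector_mult_add_rdistrib mscale_mult_vector outer_mult_vector)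
  have "l = c \<or> l = -c" if "l \<noteq> 0" "x \<noteq> 0" "M *v x = l *s x" for l x
  proof -
    define \<alpha> where "\<alpha> = dot v x"
    define \<beta> where "\<beta> = dot z x"
    have eqs: "l * \<alpha> = \<beta> * dot v w" "l * \<beta> = c * \<alpha> * dot z u"
      using arg_cong[OF \<open>M *v x = l *s x\<close>, of "dot v"] arg_cong[OF \<open>M *v x = l *s x\<close>, of "dot z"]
      by (simp_all add: M vu zw \<alpha>_def \<beta>_def)
    have "l * l * \<alpha> = c * c * \<alpha>" "l * l * \<beta> = c * c * \<beta>"
      using eqs c(1) by algebra+
    moreover have "\<alpha> \<noteq> 0 \<or> \<beta> \<noteq> 0"
      using that by (auto simp: M \<alpha>_def \<beta>_def)
    ultimately have "(l - c) * (l + c) = 0"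
      by (auto simp: algebra_simps)
    then show ?thesis
      by (auto simp: add_eq_0_iff)
  qed
  then have "eigenvalues M \<subseteq> {c, -c, 0}"
    by (auto simp: eigenvalues_def)
  moreover have "l \<in> eigenvalues M" if "l * l = c * c" for l
  proof -
    define x where "x = l *s u + dot z u *s w"
    have vx: "dot v x = dot z u * dot v w" and "dot z x = l * dot z u"
      using vu zw by (simp_all add: x_def)
    then have "M *v x = (c * (dot z u * dot v w)) *s u + (l * dot z u) *s w"
      by (simp add: M)
    also have "c * (dot z u * dot v w) = l * l"
      using that c(1) by (simp add: mult.commute)
    finally have "M *v x = l *s x"
      by (simp add: x_def vector_add_ldistrib)
    moreover have "x \<noteq> 0"
      using vx c by auto
    ultimately show ?thesis
      by (auto simp: eigenvalues_def)
  qed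
  moreover have "0 \<in> eigenvalues M"
  proof -
    obtain x where "x \<noteq> 0" "dot v x = 0" "dot z x = 0"
      using common_orthogonal_vector_exists[OF assms(1)] .
    then show ?thesis
      by (auto simp: eigenvalues_def M intro!: exI[of _ x])
  qed
  ultimately show ?thesis
    by (auto simp: M_def)
qed

lemma trace_mult_eq_0_if_eigenvalues_le_2:
  fixes A B :: "'a::field^'n^'n"
  assumes "CHAR('a) \<noteq> 2" "CARD('n) \<ge> 3"
    and "rank A = 1" "trace A = 0" "rank B = 1" "trace B = 0"
    and "card (eigenvalues (mscale (trace (A ** B)) A + B)) \<le> 2"
  shows "trace (A ** B) = 0"
proof (rule ccontr)
  define c where "c = trace (A ** B)"
  assume "c \<noteq> 0"
  obtain u v where A: "A = outer u v"
    using rank_1_imp_outer[OF assms(3)] .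
  obtain w z where B: "B = outer w z"
    using rank_1_imp_outer[OF assms(5)] .
  have "dot v u = 0" "dot z w = 0"
    using assms(4,6) by (simp_all add: A B trace_outer dot_commute)
  moreover have "c = dot v w * dot z u"
    by (simp add: c_def A B trace_outer_mult_outer)
  ultimately have "eigenvalues (mscale c A + B) = {c, -c, 0}"
    unfolding A B by (rule eigenvalues_scaled_outer_plus_outer[OF assms(2) _ _ _ \<open>c \<noteq> 0\<close>])
  moreover have "c \<noteq> -c"
    using \<open>c \<noteq> 0\<close> two_neq_zero_if_CHAR_neq_2[OF assms(1)]
    by (simp add: eq_neg_iff_add_eq_0 mult_2[symmetric])
  ultimately have "card (eigenvalues (mscale c A + B)) = 3"
    using \<open>c \<noteq> 0\<close> by simp
  with assms(7) show False
    by (simp add: c_def)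
qed

lemma trace_mult_mscale_right: "trace (X ** mscale c Y) = c * trace (X ** Y)"
  by (simp add: trace_def mscale_def matrix_matrix_mult_def sum_distrib_left algebra_simps)

lemma mat_subspace_trace_annihilator: "mat.subspace {Y. trace (X ** Y) = 0}"
  by (auto simp: mat.subspace_def matrix_add_ldistrib trace_add trace_mult_mscale_right trace_0[unfolded mat_0])

lemma trace_mult_eq_0_on_span:
  assumes "\<And>A B. A \<in> S \<Longrightarrow> B \<in> S \<Longrightarrow> trace (A ** B) = 0"
    and "X \<in> mat.span S" "Y \<in> mat.span S"
  shows "trace (X ** Y) = 0"
proof -
  have span_annihilates: "mat.span S \<subseteq> {Z. trace (A ** Z) = 0}" if "S \<subseteq> {Z. trace (A ** Z) = 0}" for A
    using that by (rule mat.span_minimal[OF _ mat_subspace_trace_annihilator])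
  have "trace (Y ** A) = 0" if "A \<in> S" for A
  proof -
    have "mat.span S \<subseteq> {Z. trace (A ** Z) = 0}"
      using assms(1) that by (intro span_annihilates) blast
    with assms(3) show ?thesis
      by (auto simp: trace_mul_sym[of Y A])
  qed
  then have "mat.span S \<subseteq> {Z. trace (Y ** Z) = 0}"
    by (intro span_annihilates) blast
  with assms(2) show ?thesis
    by (auto simp: trace_mul_sym[of X Y])
qed

definition flat :: "'a^'n^'m \<Rightarrow> 'a^('m \<times> 'n)" where
  "flat X = (\<chi> p. X $ fst p $ snd p)"

definition unflat :: "'a^('m \<times> 'n) \<Rightarrow> 'a^'n^'m" where
  "unflat x = (\<chi> i j. x $ (i, j))"

lemma dot_flat_flat_transpose: "dot (flat X) (flat (transpose Y)) = trace (X ** Y)"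
proof -
  have "dot (flat X) (flat (transpose Y)) = (\<Sum>p\<in>UNIV \<times> UNIV. X $ fst p $ snd p * Y $ snd p $ fst p)"
    by (simp add: dot_def flat_def transpose_def)
  also have "\<dots> = trace (X ** Y)"
    by (simp add: trace_def matrix_matrix_mult_def sum.cartesian_product case_prod_beta)
  finally show ?thesis .
qed

lemma vec_dim_image_eq_mat_dim:
  fixes f :: "'a::field^'n^'n \<Rightarrow> 'a^'k"
  assumes "Vector_Spaces.linear (*s) mscale g" "\<And>X. g (f X) = X" "\<And>x. f (g x) = x"
  shows "vec.dim (f ` V) = mat.dim V"
proof -
  interpret finite_dimensional_vector_space_pair_1 "(*s)" "cart_basis :: ('a^'k) set" mscale
    by unfold_locales
  have "inj g"
    by (metis assms(3) injI)
  then have "mat.dim (g ` f ` V) = vec.dim (f ` V)"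
    by (intro dim_image_eq[OF assms(1)]) (auto intro: inj_on_subset)
  moreover have "g ` f ` V = V"
    by (simp add: image_image assms(2))
  ultimately show ?thesis
    by simp
qed

theorem mat_dim_le_if_trace_form_isotropic:
  fixes V :: "('a::field^'n^'n) set"
  assumes "mat.subspace V" and isotropic: "\<And>X Y. X \<in> V \<Longrightarrow> Y \<in> V \<Longrightarrow> trace (X ** Y) = 0"
  shows "2 * mat.dim V \<le> CARD('n) ^ 2"
proof -
  let ?f = "flat :: 'a^'n^'n \<Rightarrow> _" and ?g = "\<lambda>X :: 'a^'n^'n. flat (transpose X)"
  have lin: "Vector_Spaces.linear mscale (*s) ?f" "Vector_Spaces.linear mscale (*s) ?g"
    by (unfold_locales; simp add: flat_def transpose_def mscale_def vec_eq_iff algebra_simps)+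
  have "vec.dim (?f ` V) + vec.dim (?g ` V) \<le> CARD('n \<times> 'n)"
  proof (rule dim_add_dim_le_if_orthogonal)
    show "vec.subspace (?f ` V)" "vec.subspace (?g ` V)"
      using lin assms(1) by (simp_all add: module_hom.subspace_image module_hom_iff_linear)
    show "dot u w = 0" if "u \<in> ?f ` V" "w \<in> ?g ` V" for u w
      using that isotropic by (auto simp: dot_flat_flat_transpose)
  qed
  moreover have "vec.dim (?f ` V) = mat.dim V"
    by (rule vec_dim_image_eq_mat_dim[where g = unflat])
      (unfold_locales, simp_all add: flat_def unflat_def mscale_def vec_eq_iff algebra_simps)
  moreover have "vec.dim (?g ` V) = mat.dim V"
    by (rule vec_dim_image_eq_mat_dim[where g = "\<lambda>x. transpose (unflat x)"])
      (unfold_locales, simp_all add: flat_def unflat_def transpose_def mscale_def vec_eq_iff algebra_simps)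
  ultimately show ?thesis
    by (simp add: power2_eq_square)
qed

theorem mainTheorem11:
  fixes V :: "('a::field^'n^'n) set"
  assumes "CHAR('a) \<noteq> 2"
    and "CARD('n) \<ge> 3"
    and "mat.subspace V"
    and "\<forall>A\<in>V. card (eigenvalues A) \<le> 2"
    and "\<exists>S. S \<subseteq> {A. rank A = 1 \<and> trace A = 0} \<and> mat.span S = V"
  shows "real (mat.dim V) \<le> real (CARD('n))^2 / 2"
proof -
  obtain S where S: "S \<subseteq> {A. rank A = 1 \<and> trace A = 0}" "mat.span S = V"
    using assms(5) by blast
  have "trace (A ** B) = 0" if "A \<in> S" "B \<in> S" for A B
  proof (rule trace_mult_eq_0_if_eigenvalues_le_2[OF assms(1,2)])
    show "rank A = 1" "trace A = 0" "rank B = 1" "trace B = 0"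
      using that S(1) by auto
    have "mscale (trace (A ** B)) A + B \<in> V"
      using that S(2) by (auto intro: mat.span_add mat.span_scale mat.span_base)
    then show "card (eigenvalues (mscale (trace (A ** B)) A + B)) \<le> 2"
      using assms(4) by blast
  qed
  then have "trace (X ** Y) = 0" if "X \<in> V" "Y \<in> V" for X Y
    using trace_mult_eq_0_on_span that S(2) by blast
  then have "2 * mat.dim V \<le> CARD('n) ^ 2"
    by (rule mat_dim_le_if_trace_form_isotropic[OF assms(3)])
  then show ?thesis
    by (simp add: field_simps flip: of_nat_power)
qed

end
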